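(* Let $v\ge 2$ and $k\ge 2$ be integers with $k$ even. Then there exists an AOA$(1,k-1,k,v)$.
   Context: An orthogonal array OA$(t,k,v)$ (with $1\le t\le k$) is a $v^t\times k$ array with entries from a set $X$ of size $v$ such that, for every choice of $t$ of its columns, each $t$-tuple in $X^t$ appears exactly once as a row of the corresponding $v^t\times t$ subarray. For integers $1\le s\le t\le k$, an augmented orthogonal array AOA$(s,t,k,v)$ is a $v^t\times(k+1)$ array $A$ such that: (1) the first $k$ columns of $A$ form an OA$(t,k,v)$ on a symbol set $X$ of size $v$; (2) the last column of $A$ has entries from a set $Y$ of size $v^{t-s}$; (3) for any choice of $s$ of the first $k$ columns, these $s$ columns together with the last column contain every $(s+1)$-tuple of $X^s\times Y$ exactly once as a row. *)

theory Defs
  imports Main "HOL-Library.FuncSet"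
begin

text \<open>An array with N rows is a function A :: nat => nat => 'a, where A r c is the
entry in row r < N and column c. Rows are indexed by {0..<N}, columns by {0..<k}.\<close>

definition is_OA :: "nat \<Rightarrow> nat \<Rightarrow> nat \<Rightarrow> 'a set \<Rightarrow> (nat \<Rightarrow> nat \<Rightarrow> 'a) \<Rightarrow> bool" where
  "is_OA t k v X A \<longleftrightarrow>
     1 \<le> t \<and> t \<le> k \<and> finite X \<and> card X = v \<and>
     (\<forall>r < v ^ t. \<forall>c < k. A r c \<in> X) \<and>
     (\<forall>C. C \<subseteq> {0..<k} \<and> card C = t \<longrightarrow>
        (\<forall>f \<in> C \<rightarrow>\<^sub>E X. \<exists>!r. r < v ^ t \<and> (\<forall>c\<in>C. A r c = f c)))"

definition is_AOA :: "nat \<Rightarrow> nat \<Rightarrow> nat \<Rightarrow> nat \<Rightarrow> 'a set \<Rightarrow> 'a set \<Rightarrow> (nat \<Rightarrow> nat \<Rightarrow> 'a) \<Rightarrow> bool" where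
  "is_AOA s t k v X Y A \<longleftrightarrow>
     1 \<le> s \<and> s \<le> t \<and> t \<le> k \<and>
     is_OA t k v X A \<and>
     finite Y \<and> card Y = v ^ (t - s) \<and>
     (\<forall>r < v ^ t. A r k \<in> Y) \<and>
     (\<forall>C. C \<subseteq> {0..<k} \<and> card C = s \<longrightarrow>
        (\<forall>f \<in> C \<rightarrow>\<^sub>E X. \<forall>y \<in> Y.
           \<exists>!r. r < v ^ t \<and> (\<forall>c\<in>C. A r c = f c) \<and> A r k = y))"

end

theory Submission
  imports Defs
begin

text \<open>
  Take as rows the words x in (Z/v)^k with coordinate sum 0. Fixing any k - 1 coordinates
  determines the remaining one, so they form an OA(k-1, k, v). Since k is even, adding a multiple
  of the alternating vector w = (1, -1, 1, ..., -1) preserves the zero sum, so Z/v acts on the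
  rows by translation along w; label every row by its orbit. Each coordinate of w is a unit, so
  within an orbit a single coordinate takes every value exactly once: any one column together
  with the label column contains every pair exactly once. Counting rows then shows that there
  are v^(k-2) orbits.
\<close>

text \<open>
  With Y = {()} the label L carries no information and rows_cover is the orthogonal-array
  condition on the columns C.
\<close>

definition rows_cover ::
    "nat set \<Rightarrow> 'b set \<Rightarrow> 'c set \<Rightarrow> 'r set \<Rightarrow> ('r \<Rightarrow> nat \<Rightarrow> 'b) \<Rightarrow> ('r \<Rightarrow> 'c) \<Rightarrow> bool" where
  "rows_cover C X Y R E L \<longleftrightarrow>
     (\<forall>f \<in> C \<rightarrow>\<^sub>E X. \<forall>y \<in> Y. \<exists>!\<rho>. \<rho> \<in> R \<and> (\<forall>c\<in>C. E \<rho> c = f c) \<and> L \<rho> = y)"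

lemma rows_cover_unit_iff:
  "rows_cover C X {()} R E (\<lambda>_. ()) \<longleftrightarrow>
     (\<forall>f \<in> C \<rightarrow>\<^sub>E X. \<exists>!\<rho>. \<rho> \<in> R \<and> (\<forall>c\<in>C. E \<rho> c = f c))"
  by (simp add: rows_cover_def)

lemma rows_cover_singleton_iff:
  "rows_cover {c} X Y R E L \<longleftrightarrow> (\<forall>a\<in>X. \<forall>y\<in>Y. \<exists>!\<rho>. \<rho> \<in> R \<and> E \<rho> c = a \<and> L \<rho> = y)"
proof -
  have "(\<forall>f\<in>{c} \<rightarrow>\<^sub>E X. Q (f c)) \<longleftrightarrow> (\<forall>a\<in>X. Q a)" for Q
    unfolding PiE_over_singleton_iff by auto
  then show ?thesis
    unfolding rows_cover_def by (simp only: ball_simps simp_thms)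
qed

lemma agree_on_iff_restrict_eq:
  assumes "f \<in> extensional C"
  shows "(\<forall>c\<in>C. g c = f c) \<longleftrightarrow> restrict g C = f"
  using assms by (auto simp: extensional_def)

lemma bij_betw_rows_cover:
  assumes "\<forall>\<rho>\<in>R. \<forall>c\<in>C. E \<rho> c \<in> X" "\<forall>\<rho>\<in>R. L \<rho> \<in> Y" "rows_cover C X Y R E L"
  shows "bij_betw (\<lambda>\<rho>. (restrict (E \<rho>) C, L \<rho>)) R ((C \<rightarrow>\<^sub>E X) \<times> Y)"
proof -
  have key: "\<exists>!\<rho>. \<rho> \<in> R \<and> (restrict (E \<rho>) C, L \<rho>) = (f, y)" if "f \<in> C \<rightarrow>\<^sub>E X" "y \<in> Y" for f y
  proof -
    have "\<exists>!\<rho>. \<rho> \<in> R \<and> (\<forall>c\<in>C. E \<rho> c = f c) \<and> L \<rho> = y"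
      using assms(3) that unfolding rows_cover_def by blast
    then show ?thesis
      using agree_on_iff_restrict_eq[of f C] that(1) by (simp add: PiE_def)
  qed
  show ?thesis
    unfolding bij_betw_def inj_on_def
  proof safe
    show "\<rho> = \<sigma>" if "\<rho> \<in> R" "\<sigma> \<in> R" "restrict (E \<rho>) C = restrict (E \<sigma>) C" "L \<rho> = L \<sigma>" for \<rho> \<sigma>
      using key[of "restrict (E \<rho>) C" "L \<rho>"] that assms(1,2) by auto
    show "(f, y) \<in> (\<lambda>\<rho>. (restrict (E \<rho>) C, L \<rho>)) ` R" if "f \<in> C \<rightarrow>\<^sub>E X" "y \<in> Y" for f y
      using key[OF that] by (metis (no_types, lifting) image_eqI)
  qed (use assms(1,2) in auto)
qed

lemma card_rows_cover:
  assumes "finite C" "\<forall>\<rho>\<in>R. \<forall>c\<in>C. E \<rho> c \<in> X" "\<forall>\<rho>\<in>R. L \<rho> \<in> Y" "rows_cover C X Y R E L"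
  shows "card R = card X ^ card C * card Y"
  using bij_betw_same_card[OF bij_betw_rows_cover[OF assms(2-4)]] assms(1)
  by (simp add: card_cartesian_product card_PiE)

lemma ex1_bij_betw_iff:
  assumes "bij_betw g S R"
  shows "(\<exists>!\<rho>. \<rho> \<in> R \<and> P \<rho>) \<longleftrightarrow> (\<exists>!r. r \<in> S \<and> P (g r))"
  using assms unfolding bij_betw_def inj_on_def by blast

lemma rows_cover_cong:
  assumes "\<And>\<rho> c. \<rho> \<in> R \<Longrightarrow> c \<in> C \<Longrightarrow> E \<rho> c = E' \<rho> c" "\<And>\<rho>. \<rho> \<in> R \<Longrightarrow> L \<rho> = L' \<rho>"
  shows "rows_cover C X Y R E L \<longleftrightarrow> rows_cover C X Y R E' L'"
proof -
  have "\<rho> \<in> R \<and> (\<forall>c\<in>C. E \<rho> c = f c) \<and> L \<rho> = y \<longleftrightarrow> \<rho> \<in> R \<and> (\<forall>c\<in>C. E' \<rho> c = f c) \<and> L' \<rho> = y"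
    for \<rho> f y
    using assms by auto
  then show ?thesis
    unfolding rows_cover_def by (simp only:)
qed

lemma bij_betw_apply_eq_iff:
  assumes "bij_betw p X X'" "x \<in> X" "y \<in> X'"
  shows "p x = y \<longleftrightarrow> x = inv_into X p y"
  using assms by (metis bij_betw_def bij_betw_inv_into_right inv_into_f_f)

lemma rows_cover_transfer:
  assumes g: "bij_betw g R' R" and p: "bij_betw p X X'" and q: "bij_betw q Y Y'"
    and E: "\<forall>\<rho>\<in>R. \<forall>c\<in>C. E \<rho> c \<in> X" and L: "\<forall>\<rho>\<in>R. L \<rho> \<in> Y"
    and cover: "rows_cover C X Y R E L"
  shows "rows_cover C X' Y' R' (\<lambda>r c. p (E (g r) c)) (\<lambda>r. q (L (g r)))"
  unfolding rows_cover_def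
proof (intro ballI)
  fix f y assume f: "f \<in> C \<rightarrow>\<^sub>E X'" and y: "y \<in> Y'"
  define f0 where "f0 = restrict (\<lambda>c. inv_into X p (f c)) C"
  define y0 where "y0 = inv_into Y q y"
  have "f0 \<in> C \<rightarrow>\<^sub>E X" "y0 \<in> Y"
    using f y p q by (auto simp: f0_def y0_def bij_betw_def inv_into_into PiE_iff)
  then have unique: "\<exists>!\<rho>. \<rho> \<in> R \<and> (\<forall>c\<in>C. E \<rho> c = f0 c) \<and> L \<rho> = y0"
    using cover by (simp add: rows_cover_def)
  have "(\<forall>c\<in>C. p (E \<rho> c) = f c) \<and> q (L \<rho>) = y \<longleftrightarrow> (\<forall>c\<in>C. E \<rho> c = f0 c) \<and> L \<rho> = y0"
    if "\<rho> \<in> R" for \<rho>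
    using that E L f y bij_betw_apply_eq_iff[OF p] bij_betw_apply_eq_iff[OF q]
    by (auto simp: f0_def y0_def PiE_iff)
  then have "\<rho> \<in> R \<and> (\<forall>c\<in>C. p (E \<rho> c) = f c) \<and> q (L \<rho>) = y \<longleftrightarrow>
      \<rho> \<in> R \<and> (\<forall>c\<in>C. E \<rho> c = f0 c) \<and> L \<rho> = y0" for \<rho>
    by blast
  with unique have "\<exists>!\<rho>. \<rho> \<in> R \<and> (\<forall>c\<in>C. p (E \<rho> c) = f c) \<and> q (L \<rho>) = y"
    by (simp only:)
  then show "\<exists>!r. r \<in> R' \<and> (\<forall>c\<in>C. p (E (g r) c) = f c) \<and> q (L (g r)) = y"
    using ex1_bij_betw_iff[OF g] by simp
qed

lemma is_AOA_if_rows_cover: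
  assumes "1 \<le> s" "s \<le> t" "t \<le> k" "finite X" "card X = v" "finite Y" "card Y = v ^ (t - s)"
    and "\<forall>r < v ^ t. \<forall>c < k. A r c \<in> X" "\<forall>r < v ^ t. A r k \<in> Y"
    and "\<forall>C. C \<subseteq> {0..<k} \<and> card C = t \<longrightarrow> rows_cover C X {()} {..<v ^ t} A (\<lambda>_. ())"
    and "\<forall>C. C \<subseteq> {0..<k} \<and> card C = s \<longrightarrow> rows_cover C X Y {..<v ^ t} A (\<lambda>r. A r k)"
  shows "is_AOA s t k v X Y A"
  using assms unfolding is_AOA_def is_OA_def rows_cover_unit_iff by (auto simp: rows_cover_def)

lemma ex_AOA_if_rows_cover:
  fixes R :: "'r set" and E :: "'r \<Rightarrow> nat \<Rightarrow> 'b" and L :: "'r \<Rightarrow> 'c"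
  assumes st: "1 \<le> s" "s \<le> t" "t \<le> k"
    and fin: "finite R" "finite X" "X \<noteq> {}" "finite Y"
    and E: "\<forall>\<rho>\<in>R. \<forall>c<k. E \<rho> c \<in> X" and L: "\<forall>\<rho>\<in>R. L \<rho> \<in> Y"
    and cover_t: "\<forall>C. C \<subseteq> {0..<k} \<and> card C = t \<longrightarrow> rows_cover C X {()} R E (\<lambda>_. ())"
    and cover_s: "\<forall>C. C \<subseteq> {0..<k} \<and> card C = s \<longrightarrow> rows_cover C X Y R E L"
  shows "\<exists>(X' :: nat set) (Y' :: nat set) (A :: nat \<Rightarrow> nat \<Rightarrow> nat). is_AOA s t k (card X) X' Y' A"
proof -
  define v where "v = card X"
  have EC: "\<forall>\<rho>\<in>R. \<forall>c\<in>C. E \<rho> c \<in> X" if "C \<subseteq> {0..<k}" for C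
    using E that by auto
  have "card R = v ^ t"
    using card_rows_cover[OF _ EC _ cover_t[rule_format], of "{0..<t}"] st by (simp add: v_def)
  moreover have "card R = v ^ s * card Y"
    using card_rows_cover[OF _ EC L cover_s[rule_format], of "{0..<s}"] st by (simp add: v_def)
  moreover have "v ^ t = v ^ s * v ^ (t - s)"
    using st by (simp flip: power_add)
  moreover have "v \<noteq> 0"
    using fin by (simp add: v_def)
  ultimately have cardY: "card Y = v ^ (t - s)"
    by simp
  obtain g where g: "bij_betw g {..<v ^ t} R"
    using finite_same_card_bij[of "{..<v ^ t}" R] fin(1) \<open>card R = v ^ t\<close> by (metis card_lessThan finite_lessThan)
  obtain p where p: "bij_betw p X {0..<v}"
    using finite_same_card_bij[of X "{0..<v}"] fin by (metis card_atLeastLessThan diff_zero finite_atLeastLessThan v_def)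
  obtain q where q: "bij_betw q Y {0..<v ^ (t - s)}"
    using finite_same_card_bij[of Y "{0..<v ^ (t - s)}"] fin cardY by (metis card_atLeastLessThan diff_zero finite_atLeastLessThan)
  define A where "A r c = (if c = k then q (L (g r)) else p (E (g r) c))" for r c
  have A_cover: "rows_cover C {0..<v} Y' {..<v ^ t} A L'"
    if "C \<subseteq> {0..<k}" "rows_cover C {0..<v} Y' {..<v ^ t} (\<lambda>r c. p (E (g r) c)) L'" for C Y' L'
    using that by (subst rows_cover_cong) (auto simp: A_def)
  have gR: "g r \<in> R" if "r < v ^ t" for r
    using g that by (auto dest: bij_betw_apply)
  have "is_AOA s t k v {0..<v} {0..<v ^ (t - s)} A"
  proof (rule is_AOA_if_rows_cover)
    show "\<forall>r < v ^ t. \<forall>c < k. A r c \<in> {0..<v}"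
      using E gR bij_betw_apply[OF p] by (simp add: A_def)
    show "\<forall>r < v ^ t. A r k \<in> {0..<v ^ (t - s)}"
      using L gR bij_betw_apply[OF q] by (simp add: A_def)
    show "\<forall>C. C \<subseteq> {0..<k} \<and> card C = t \<longrightarrow> rows_cover C {0..<v} {()} {..<v ^ t} A (\<lambda>_. ())"
    proof (intro allI impI)
      fix C assume C: "C \<subseteq> {0..<k} \<and> card C = t"
      have "rows_cover C {0..<v} {()} {..<v ^ t} (\<lambda>r c. p (E (g r) c)) (\<lambda>r. id ((\<lambda>_. ()) (g r)))"
        using C by (intro rows_cover_transfer[OF g p bij_betw_id EC _ cover_t[rule_format]]) auto
      then show "rows_cover C {0..<v} {()} {..<v ^ t} A (\<lambda>_. ())"
        using C by (intro A_cover) simp_all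
    qed
    show "\<forall>C. C \<subseteq> {0..<k} \<and> card C = s \<longrightarrow> rows_cover C {0..<v} {0..<v ^ (t - s)} {..<v ^ t} A (\<lambda>r. A r k)"
    proof (intro allI impI)
      fix C assume C: "C \<subseteq> {0..<k} \<and> card C = s"
      have "rows_cover C {0..<v} {0..<v ^ (t - s)} {..<v ^ t} (\<lambda>r c. p (E (g r) c)) (\<lambda>r. q (L (g r)))"
        using C by (intro rows_cover_transfer[OF g p q EC L cover_s[rule_format]]) auto
      moreover have "(\<lambda>r. A r k) = (\<lambda>r. q (L (g r)))"
        by (simp add: A_def)
      ultimately show "rows_cover C {0..<v} {0..<v ^ (t - s)} {..<v ^ t} A (\<lambda>r. A r k)"
        using C by (intro A_cover) simp_all
    qed
  qed (use st fin cardY in simp_all)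
  then show ?thesis
    unfolding v_def by blast
qed

lemma subset_card_minus_one_obtains:
  assumes "C \<subseteq> A" "finite A" "card C = card A - 1" "A \<noteq> {}"
  obtains m where "m \<in> A" "C = A - {m}"
proof -
  have "card (A - C) = 1"
    using assms by (simp add: card_Diff_subset finite_subset card_gt_0_iff Suc_leI)
  then obtain m where "A - C = {m}"
    by (rule card_1_singletonE)
  then show ?thesis
    using that assms(1) by blast
qed

definition alt_sign :: "nat \<Rightarrow> int" where
  "alt_sign i = (if even i then 1 else -1)"

definition zero_sum_words :: "nat \<Rightarrow> nat \<Rightarrow> (nat \<Rightarrow> int) set" where
  "zero_sum_words k v = {x \<in> {0..<k} \<rightarrow>\<^sub>E {0..<int v}. (\<Sum>i = 0..<k. x i) mod int v = 0}"

definition alt_shift :: "nat \<Rightarrow> nat \<Rightarrow> int \<Rightarrow> (nat \<Rightarrow> int) \<Rightarrow> nat \<Rightarrow> int" where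
  "alt_shift k v j x = (\<lambda>i\<in>{0..<k}. (x i + alt_sign i * j) mod int v)"

definition alt_orbit :: "nat \<Rightarrow> nat \<Rightarrow> (nat \<Rightarrow> int) \<Rightarrow> (nat \<Rightarrow> int) set" where
  "alt_orbit k v x = range (\<lambda>j. alt_shift k v j x)"

lemma finite_zero_sum_words: "finite (zero_sum_words k v)"
  by (rule finite_subset[of _ "{0..<k} \<rightarrow>\<^sub>E {0..<int v}"]) (auto simp: zero_sum_words_def intro: finite_PiE)

lemma alt_sign_mult_cancel [simp]: "alt_sign i * (alt_sign i * j) = j"
  by (simp add: alt_sign_def)

lemma sum_alt_sign_even:
  assumes "even k"
  shows "(\<Sum>i = 0..<k. alt_sign i) = 0"
proof -
  have "(\<Sum>i = 0..<2 * m. alt_sign i) = 0" for m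
    by (induction m) (auto simp: alt_sign_def)
  then show ?thesis
    using assms by (auto elim: evenE)
qed

lemma alt_shift_apply:
  "i < k \<Longrightarrow> alt_shift k v j x i = (x i + alt_sign i * j) mod int v"
  by (simp add: alt_shift_def)

lemma alt_shift_add: "alt_shift k v i (alt_shift k v j x) = alt_shift k v (i + j) x"
proof -
  have "((x n + alt_sign n * j) mod int v + alt_sign n * i) mod int v = (x n + alt_sign n * (i + j)) mod int v"
    for n
    by (simp add: mod_add_left_eq distrib_left add.assoc add.commute[of "alt_sign n * j"])
  then show ?thesis
    by (auto simp: alt_shift_def intro!: restrict_ext)
qed

lemma alt_shift_multiple:
  assumes "x \<in> zero_sum_words k v" "int v dvd j"
  shows "alt_shift k v j x = x"
proof (rule ext)
  fix i
  show "alt_shift k v j x i = x i"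
  proof (cases "i < k")
    case True
    then have "x i \<in> {0..<int v}"
      using assms(1) by (auto simp: zero_sum_words_def)
    moreover obtain m where "j = int v * m"
      using assms(2) ..
    ultimately show ?thesis
      using True by (simp add: alt_shift_def mult.left_commute[of _ "int v"])
  qed (use assms(1) in \<open>auto simp: alt_shift_def zero_sum_words_def PiE_def extensional_def\<close>)
qed

lemma alt_shift_mem_zero_sum_words_iff:
  assumes "even k" "0 < v"
  shows "alt_shift k v j x \<in> zero_sum_words k v \<longleftrightarrow> (\<Sum>i = 0..<k. x i) mod int v = 0"
proof -
  have "(\<Sum>i = 0..<k. alt_shift k v j x i) mod int v = (\<Sum>i = 0..<k. x i + alt_sign i * j) mod int v"
    by (simp add: alt_shift_def mod_sum_eq)
  also have "\<dots> = (\<Sum>i = 0..<k. x i) mod int v"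
    using sum_alt_sign_even[OF assms(1)] by (simp add: sum.distrib flip: sum_distrib_right)
  finally have "(\<Sum>i = 0..<k. alt_shift k v j x i) mod int v = (\<Sum>i = 0..<k. x i) mod int v" .
  moreover have "alt_shift k v j x \<in> {0..<k} \<rightarrow>\<^sub>E {0..<int v}"
    using assms(2) by (simp add: alt_shift_def)
  ultimately show ?thesis
    by (simp add: zero_sum_words_def)
qed

lemma alt_orbit_eq_iff:
  assumes "z \<in> zero_sum_words k v"
  shows "alt_orbit k v z = alt_orbit k v x \<longleftrightarrow> (\<exists>j. z = alt_shift k v j x)"
proof
  assume "alt_orbit k v z = alt_orbit k v x"
  moreover have "z \<in> alt_orbit k v z"
    using alt_shift_multiple[OF assms, of 0] unfolding alt_orbit_def by (metis rangeI dvd_0_right)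
  ultimately show "\<exists>j. z = alt_shift k v j x"
    unfolding alt_orbit_def by (metis imageE)
next
  assume "\<exists>j. z = alt_shift k v j x"
  then obtain j where z: "z = alt_shift k v j x" ..
  have "range (\<lambda>i. alt_shift k v (i + j) x) = (\<lambda>i. alt_shift k v i x) ` range (\<lambda>i. i + j)"
    by (simp only: image_image)
  also have "\<dots> = range (\<lambda>i. alt_shift k v i x)"
    using surj_plus_right[of j] by simp
  finally show "alt_orbit k v z = alt_orbit k v x"
    by (simp add: alt_orbit_def z alt_shift_add)
qed

lemma zero_sum_words_cover_column:
  assumes "even k" "0 < v" "c < k"
  shows "rows_cover {c} {0..<int v} (alt_orbit k v ` zero_sum_words k v) (zero_sum_words k v)
           (\<lambda>x i. x i) (alt_orbit k v)"
  unfolding rows_cover_singleton_iff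
proof (intro ballI)
  fix a y assume a: "a \<in> {0..<int v}" and y: "y \<in> alt_orbit k v ` zero_sum_words k v"
  obtain x' where x': "y = alt_orbit k v x'" "x' \<in> zero_sum_words k v"
    using y by (rule imageE)
  define x where "x = alt_shift k v (alt_sign c * (a - x' c)) x'"
  have "(\<Sum>i = 0..<k. x' i) mod int v = 0"
    using x'(2) by (simp add: zero_sum_words_def)
  then have x: "x \<in> zero_sum_words k v"
    unfolding x_def by (rule alt_shift_mem_zero_sum_words_iff[OF assms(1,2), THEN iffD2])
  have "x c = a"
    using a assms(3) by (simp add: x_def alt_shift_apply)
  moreover have "alt_orbit k v x = y"
    unfolding x'(1) using alt_orbit_eq_iff[OF x, of x'] x_def by blast
  moreover have "z = x" if z: "z \<in> zero_sum_words k v" "z c = a" "alt_orbit k v z = y" for z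
  proof -
    obtain j where j: "z = alt_shift k v j x"
      using alt_orbit_eq_iff[OF z(1), of x] z(3) \<open>alt_orbit k v x = y\<close> by blast
    have "(x c + alt_sign c * j) mod int v = x c mod int v"
      using z(2) \<open>x c = a\<close> a assms(3) by (simp add: j alt_shift_apply)
    then have "int v dvd alt_sign c * j"
      by (simp add: mod_eq_dvd_iff)
    then have "int v dvd alt_sign c * (alt_sign c * j)"
      by (rule dvd_mult)
    then show "z = x"
      using j alt_shift_multiple[OF x] by simp
  qed
  ultimately show "\<exists>!x. x \<in> zero_sum_words k v \<and> x c = a \<and> alt_orbit k v x = y"
    using x by (intro ex1I[of _ x]) blast+
qed

lemma zero_sum_words_cover_all_but_one:
  assumes "0 < v" "m < k"
  shows "rows_cover ({0..<k} - {m}) {0..<int v} {()} (zero_sum_words k v) (\<lambda>x i. x i) (\<lambda>_. ())"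
  unfolding rows_cover_unit_iff
proof (intro ballI)
  let ?C = "{0..<k} - {m}"
  fix f assume f: "f \<in> ?C \<rightarrow>\<^sub>E {0..<int v}"
  have split: "(\<Sum>i = 0..<k. x i) = x m + (\<Sum>i\<in>?C. x i)" for x :: "nat \<Rightarrow> int"
    using assms(2) by (simp add: sum.remove)
  define x where "x = f(m := - (\<Sum>i\<in>?C. f i) mod int v)"
  have x: "x \<in> zero_sum_words k v"
  proof -
    have "x \<in> {0..<k} \<rightarrow>\<^sub>E {0..<int v}"
      using f assms by (auto simp: x_def PiE_iff extensional_def)
    moreover have "(\<Sum>i\<in>?C. x i) = (\<Sum>i\<in>?C. f i)"
      by (simp add: x_def)
    ultimately show ?thesis
      by (simp add: zero_sum_words_def split x_def mod_add_left_eq)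
  qed
  moreover have "z = x" if z: "z \<in> zero_sum_words k v" "\<forall>i\<in>?C. z i = f i" for z
  proof
    fix i
    show "z i = x i"
    proof (cases "i = m")
      case True
      have "(z m + (\<Sum>i\<in>?C. f i)) mod int v = 0"
        using z by (simp add: zero_sum_words_def split)
      then have "z m mod int v = - (\<Sum>i\<in>?C. f i) mod int v"
        by (metis add.commute add_diff_cancel_left' diff_0 mod_diff_left_eq)
      moreover have "z m \<in> {0..<int v}"
        using z(1) assms(2) by (auto simp: zero_sum_words_def)
      ultimately show ?thesis
        using True by (simp add: x_def)
    next
      case False
      then show ?thesis
        using z f by (cases "i < k") (auto simp: x_def zero_sum_words_def PiE_iff extensional_def)
    qed
  qed
  moreover have "\<forall>i\<in>?C. x i = f i"
    by (simp add: x_def)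
  ultimately show "\<exists>!x. x \<in> zero_sum_words k v \<and> (\<forall>i\<in>?C. x i = f i)"
    by blast
qed

lemma zero_sum_words_orthogonal:
  assumes "0 < v" "1 \<le> k"
  shows "\<forall>C. C \<subseteq> {0..<k} \<and> card C = k - 1 \<longrightarrow>
           rows_cover C {0..<int v} {()} (zero_sum_words k v) (\<lambda>x i. x i) (\<lambda>_. ())"
proof (intro allI impI)
  fix C assume "C \<subseteq> {0..<k} \<and> card C = k - 1"
  then obtain m where "m \<in> {0..<k}" "C = {0..<k} - {m}"
    using assms(2) subset_card_minus_one_obtains[of C "{0..<k}"] by auto
  then show "rows_cover C {0..<int v} {()} (zero_sum_words k v) (\<lambda>x i. x i) (\<lambda>_. ())"
    using zero_sum_words_cover_all_but_one assms(1) by simp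
qed

lemma zero_sum_words_augmented:
  assumes "even k" "0 < v"
  shows "\<forall>C. C \<subseteq> {0..<k} \<and> card C = 1 \<longrightarrow> rows_cover C {0..<int v}
           (alt_orbit k v ` zero_sum_words k v) (zero_sum_words k v) (\<lambda>x i. x i) (alt_orbit k v)"
proof (intro allI impI)
  fix C assume C: "C \<subseteq> {0..<k} \<and> card C = 1"
  then obtain c where "C = {c}"
    by (metis card_1_singletonE)
  then show "rows_cover C {0..<int v}
      (alt_orbit k v ` zero_sum_words k v) (zero_sum_words k v) (\<lambda>x i. x i) (alt_orbit k v)"
    using zero_sum_words_cover_column[OF assms, of c] C by simp
qed

theorem theorem2p4:
  fixes v k :: nat
  assumes "v \<ge> 2" and "k \<ge> 2" and "even k"
  shows "\<exists>(X :: nat set) (Y :: nat set) (A :: nat \<Rightarrow> nat \<Rightarrow> nat).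
           is_AOA 1 (k - 1) k v X Y A"
proof -
  have "\<exists>(X :: nat set) (Y :: nat set) (A :: nat \<Rightarrow> nat \<Rightarrow> nat).
          is_AOA 1 (k - 1) k (card {0..<int v}) X Y A"
  proof (rule ex_AOA_if_rows_cover)
    show "\<forall>C. C \<subseteq> {0..<k} \<and> card C = k - 1 \<longrightarrow>
        rows_cover C {0..<int v} {()} (zero_sum_words k v) (\<lambda>x i. x i) (\<lambda>_. ())"
      using assms by (intro zero_sum_words_orthogonal) simp_all
    show "\<forall>C. C \<subseteq> {0..<k} \<and> card C = 1 \<longrightarrow> rows_cover C {0..<int v}
        (alt_orbit k v ` zero_sum_words k v) (zero_sum_words k v) (\<lambda>x i. x i) (alt_orbit k v)"
      using assms by (intro zero_sum_words_augmented) simp_all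
  qed (use assms finite_zero_sum_words in \<open>auto simp: zero_sum_words_def\<close>)
  then show ?thesis
    by simp
qed

end
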